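(* Let $n\ge 3$. An $n$-element subset $V\subseteq\mathbb R$ is optimal for $3$-term arithmetic progressions if and only if there is a similarity $f$ of $\mathbb R$ such that $f(V)=E\cup O$, where $E$ is a nonempty set of consecutive even integers, $O$ is a nonempty set of consecutive odd integers, and $E$ and $O$ are concentric if $n$ is odd, and nearly concentric if $n$ is even.
   Context: A $k$-term arithmetic progression is a set $\{a,a+d,\dots,a+(k-1)d\}\subseteq\mathbb R$ with $d>0$; $S_{\mathcal A_k}(V)$ denotes the number of $k$-term arithmetic progressions contained in $V$. An $n$-set $V\subseteq\mathbb R$ is optimal for $k$-term arithmetic progressions if $S_{\mathcal A_k}(V)$ equals the maximum of $S_{\mathcal A_k}(W)$ over all $n$-subsets $W\subseteq\mathbb R$, which equals $(n-r)(n+r-k+1)/(2k-2)$ with $r$ the remainder of $n$ modulo $k-1$. A similarity of $\mathbb R$ is a map $x\mapsto ax+b$ with $a\neq0$. A set of consecutive even (resp. odd) integers is a set $\{c,c+2,c+4,\dots,c+2m\}$ with $c$ even (resp. odd) and $m\ge0$. The barycenter of a finite arithmetic progression is the arithmetic mean of its elements; $E$ and $O$ are concentric if their barycenters are equal, and nearly concentric if their barycenters differ by exactly $1$. *)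

theory Defs
  imports Complex_Main
begin

definition ap :: "nat \<Rightarrow> real \<Rightarrow> real \<Rightarrow> real set" where
  "ap k a d = {a + real i * d | i. i < k}"

definition count_AP :: "nat \<Rightarrow> real set \<Rightarrow> nat" where
  "count_AP k V = card {P. \<exists>a d. d > 0 \<and> P = ap k a d \<and> P \<subseteq> V}"

definition optimal_AP :: "nat \<Rightarrow> real set \<Rightarrow> bool" where
  "optimal_AP k V \<longleftrightarrow> finite V \<and>
     (\<forall>W. finite W \<and> card W = card V \<longrightarrow> count_AP k W \<le> count_AP k V)"

definition similarity :: "(real \<Rightarrow> real) \<Rightarrow> bool" where
  "similarity f \<longleftrightarrow> (\<exists>a b. a \<noteq> 0 \<and> f = (\<lambda>x. a * x + b))"

definition consec_even :: "real set \<Rightarrow> bool" where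
  "consec_even E \<longleftrightarrow> (\<exists>(c::int) (m::nat). even c \<and>
      E = {real_of_int (c + 2 * int i) | i. i \<le> m})"

definition consec_odd :: "real set \<Rightarrow> bool" where
  "consec_odd D \<longleftrightarrow> (\<exists>(c::int) (m::nat). odd c \<and>
      D = {real_of_int (c + 2 * int i) | i. i \<le> m})"

definition barycenter :: "real set \<Rightarrow> real" where
  "barycenter A = (\<Sum>x\<in>A. x) / real (card A)"

end

theory Submission
  imports Defs
begin

text \<open>A 3-term progression is determined by its middle term v and its smaller term u, so at most
  min (#V below v, #V above v) progressions have middle v. Summing over the ranks of V gives a bound
  attained by {0, ..., n-1}; hence V is optimal iff every v is balanced: reflection in v maps
  the whole smaller side of V into V.
  For odd n the median is balanced on both sides, so V is symmetric about it, and the next element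
  reflects everything above it; after normalising these two points to 0 and 1 this forces V to be a
  union of even and odd integers symmetric about 0. For even n, possibly after reflecting V, removing
  the maximum leaves a set of that shape around the lower median, and the maximum extends one of the two
  progressions by one step, which moves its barycenter by 1.\<close>

section \<open>Optimality as balance\<close>

lemma card_eq_iff_eq_subset:
  assumes "finite B" "A \<subseteq> B"
  shows "card A = card B \<longleftrightarrow> A = B"
  using assms card_subset_eq by blast

lemma ap_3: "ap 3 a d = {a, a + d, a + 2 * d}"
proof -
  have "{a + real i * d | i. i < 3} = (\<lambda>i. a + real i * d) ` {0, 1, 2}"
    by (auto simp: numeral_3_eq_3 less_Suc_eq)
  then show ?thesis
    by (simp add: ap_def)
qed

definition rank_in :: "real set \<Rightarrow> real \<Rightarrow> nat" where
  "rank_in V v = card {u \<in> V. u < v}"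

definition corank_in :: "real set \<Rightarrow> real \<Rightarrow> nat" where
  "corank_in V v = card {u \<in> V. v < u}"

definition mid_count :: "real set \<Rightarrow> real \<Rightarrow> nat" where
  "mid_count V v = card {u \<in> V. u < v \<and> 2 * v - u \<in> V}"

definition reflects_lower :: "real set \<Rightarrow> real \<Rightarrow> bool" where
  "reflects_lower V v \<longleftrightarrow> (\<forall>u \<in> V. u < v \<longrightarrow> 2 * v - u \<in> V)"

definition reflects_upper :: "real set \<Rightarrow> real \<Rightarrow> bool" where
  "reflects_upper V v \<longleftrightarrow> (\<forall>u \<in> V. v < u \<longrightarrow> 2 * v - u \<in> V)"

definition balanced :: "real set \<Rightarrow> bool" where
  "balanced V \<longleftrightarrow> (\<forall>v \<in> V. reflects_lower V v \<or> reflects_upper V v)"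

definition ap3_bound :: "nat \<Rightarrow> nat" where
  "ap3_bound n = (\<Sum>j<n. min j (n - 1 - j))"

lemma three_term_ap_inj:
  assumes "u < v" "u' < v'" "{u, v, 2 * v - u} = {u', v', 2 * v' - u' :: real}"
  shows "u = u' \<and> v = v'"
proof -
  have "u \<in> {u', v', 2 * v' - u'}" "u' \<in> {u, v, 2 * v - u}"
    using assms(3) by auto
  then have "u = u'"
    using assms(1,2) by fastforce
  moreover have "2 * v - u \<in> {u', v', 2 * v' - u'}" "2 * v' - u' \<in> {u, v, 2 * v - u}"
    using assms(3) by auto
  then have "2 * v - u = 2 * v' - u'"
    using assms(1,2) by fastforce
  ultimately show ?thesis
    by simp
qed

lemma count_AP_3_eq_sum_mid_count:
  assumes "finite V"
  shows "count_AP 3 V = (\<Sum>v\<in>V. mid_count V v)"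
proof -
  let ?S = "SIGMA v:V. {u \<in> V. u < v \<and> 2 * v - u \<in> V}"
  let ?h = "\<lambda>(v, u). {u, v, 2 * v - u}"
  have "{P. \<exists>a d. d > 0 \<and> P = ap 3 a d \<and> P \<subseteq> V} = ?h ` ?S"
  proof (intro equalityI subsetI)
    fix P assume "P \<in> {P. \<exists>a d. d > 0 \<and> P = ap 3 a d \<and> P \<subseteq> V}"
    then obtain a d where "d > 0" "P = {a, a + d, a + 2 * d}" "P \<subseteq> V"
      by (auto simp: ap_3)
    then have "(a + d, a) \<in> ?S" "P = ?h (a + d, a)"
      by auto
    then show "P \<in> ?h ` ?S"
      by blast
  next
    fix P assume "P \<in> ?h ` ?S"
    then obtain v u where "u \<in> V" "v \<in> V" "2 * v - u \<in> V" "u < v" "P = {u, v, 2 * v - u}"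
      by auto
    then have "v - u > 0" "P = ap 3 u (v - u)" "P \<subseteq> V"
      by (auto simp: ap_3)
    then show "P \<in> {P. \<exists>a d. d > 0 \<and> P = ap 3 a d \<and> P \<subseteq> V}"
      by blast
  qed
  moreover have "inj_on ?h ?S"
    by (rule inj_onI) (use three_term_ap_inj in auto)
  ultimately have "count_AP 3 V = card ?S"
    by (simp add: count_AP_def card_image)
  also have "\<dots> = (\<Sum>v\<in>V. mid_count V v)"
    using assms by (simp add: card_SigmaI mid_count_def)
  finally show ?thesis .
qed

lemma rank_in_less_rank_in:
  assumes "finite V" "u \<in> V" "u < v"
  shows "rank_in V u < rank_in V v"
  unfolding rank_in_def by (rule psubset_card_mono) (use assms in auto)

lemma rank_in_less_card:
  assumes "finite V" "v \<in> V"
  shows "rank_in V v < card V"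
  unfolding rank_in_def by (rule psubset_card_mono) (use assms in auto)

lemma rank_in_less_iff:
  assumes "finite V" "u \<in> V" "v \<in> V"
  shows "rank_in V u < rank_in V v \<longleftrightarrow> u < v"
  using rank_in_less_rank_in[OF assms(1,2), of v] rank_in_less_rank_in[OF assms(1,3), of u]
  by (cases u v rule: linorder_cases) auto

lemma bij_betw_rank_in:
  assumes "finite V"
  shows "bij_betw (rank_in V) V {..<card V}"
proof -
  have inj: "inj_on (rank_in V) V"
    by (rule inj_onI) (metis assms rank_in_less_iff less_irrefl linorder_neqE)
  then have "card (rank_in V ` V) = card {..<card V}"
    by (simp add: card_image)
  moreover have "rank_in V ` V \<subseteq> {..<card V}"
    using rank_in_less_card[OF assms] by auto
  ultimately show ?thesis
    using inj by (simp add: bij_betw_def card_subset_eq)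
qed

lemma obtain_rank_in:
  assumes "finite V" "j < card V"
  obtains v where "v \<in> V" "rank_in V v = j"
  using bij_betw_rank_in[OF assms(1)] assms(2) unfolding bij_betw_def by (metis imageE lessThan_iff)

lemma corank_in_eq:
  assumes "finite V" "v \<in> V"
  shows "corank_in V v = card V - 1 - rank_in V v"
proof -
  have "{u \<in> V. v < u} = V - insert v {u \<in> V. u < v}"
    by auto
  moreover have "card (insert v {u \<in> V. u < v}) = Suc (rank_in V v)"
    using assms by (simp add: rank_in_def)
  ultimately show ?thesis
    using assms by (simp add: corank_in_def card_Diff_subset)
qed

lemma rank_in_uminus_image: "rank_in (uminus ` V) (- v) = corank_in V v"
proof -
  have "{u \<in> uminus ` V. u < - v} = uminus ` {u \<in> V. v < u}"
    by auto
  then show ?thesis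
    by (simp add: rank_in_def corank_in_def card_image)
qed

lemma mid_count_eq_card_above:
  "mid_count V v = card {w \<in> V. v < w \<and> 2 * v - w \<in> V}"
proof -
  have "{w \<in> V. v < w \<and> 2 * v - w \<in> V} = (\<lambda>u. 2 * v - u) ` {u \<in> V. u < v \<and> 2 * v - u \<in> V}"
    by (auto intro!: image_eqI[where x = "2 * v - _"])
  then show ?thesis
    by (simp add: mid_count_def card_image inj_on_def)
qed

lemma mid_count_le_rank_in: "finite V \<Longrightarrow> mid_count V v \<le> rank_in V v"
  unfolding mid_count_def rank_in_def by (rule card_mono) auto

lemma mid_count_le_corank_in: "finite V \<Longrightarrow> mid_count V v \<le> corank_in V v"
  unfolding mid_count_eq_card_above corank_in_def by (rule card_mono) auto

lemma mid_count_eq_rank_in_iff: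
  assumes "finite V"
  shows "mid_count V v = rank_in V v \<longleftrightarrow> reflects_lower V v"
proof -
  have "mid_count V v = rank_in V v \<longleftrightarrow> {u \<in> V. u < v \<and> 2 * v - u \<in> V} = {u \<in> V. u < v}"
    unfolding mid_count_def rank_in_def by (rule card_eq_iff_eq_subset) (use assms in auto)
  then show ?thesis
    unfolding reflects_lower_def by blast
qed

lemma mid_count_eq_corank_in_iff:
  assumes "finite V"
  shows "mid_count V v = corank_in V v \<longleftrightarrow> reflects_upper V v"
proof -
  have "mid_count V v = corank_in V v \<longleftrightarrow> {w \<in> V. v < w \<and> 2 * v - w \<in> V} = {w \<in> V. v < w}"
    unfolding mid_count_eq_card_above corank_in_def by (rule card_eq_iff_eq_subset) (use assms in auto)
  then show ?thesis
    unfolding reflects_upper_def by blast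
qed

lemma mid_count_eq_min_iff:
  assumes "finite V"
  shows "mid_count V v = min (rank_in V v) (corank_in V v) \<longleftrightarrow>
    reflects_lower V v \<or> reflects_upper V v"
  using mid_count_le_rank_in[OF assms, of v] mid_count_le_corank_in[OF assms, of v]
    mid_count_eq_rank_in_iff[OF assms, of v] mid_count_eq_corank_in_iff[OF assms, of v]
  by linarith

lemma sum_min_rank_in_corank_in:
  assumes "finite V"
  shows "(\<Sum>v\<in>V. min (rank_in V v) (corank_in V v)) = ap3_bound (card V)"
proof -
  have "(\<Sum>v\<in>V. min (rank_in V v) (corank_in V v)) =
        (\<Sum>v\<in>V. (\<lambda>j. min j (card V - 1 - j)) (rank_in V v))"
    using corank_in_eq[OF assms] by simp
  also have "\<dots> = ap3_bound (card V)"
    unfolding ap3_bound_def by (rule sum.reindex_bij_betw[OF bij_betw_rank_in[OF assms]])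
  finally show ?thesis .
qed

lemma count_AP_3_le_ap3_bound:
  assumes "finite V"
  shows "count_AP 3 V \<le> ap3_bound (card V)"
  unfolding count_AP_3_eq_sum_mid_count[OF assms] sum_min_rank_in_corank_in[OF assms, symmetric]
  by (rule sum_mono) (simp add: assms mid_count_le_rank_in mid_count_le_corank_in)

lemma count_AP_3_eq_ap3_bound_iff:
  assumes "finite V"
  shows "count_AP 3 V = ap3_bound (card V) \<longleftrightarrow> balanced V"
proof -
  have le: "\<forall>v\<in>V. mid_count V v \<le> min (rank_in V v) (corank_in V v)"
    by (simp add: assms mid_count_le_rank_in mid_count_le_corank_in)
  have "count_AP 3 V = ap3_bound (card V) \<longleftrightarrow>
        (\<Sum>v\<in>V. mid_count V v) = (\<Sum>v\<in>V. min (rank_in V v) (corank_in V v))"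
    by (simp add: assms count_AP_3_eq_sum_mid_count sum_min_rank_in_corank_in)
  also have "\<dots> \<longleftrightarrow> (\<forall>v\<in>V. mid_count V v = min (rank_in V v) (corank_in V v))"
  proof
    assume eq: "(\<Sum>v\<in>V. mid_count V v) = (\<Sum>v\<in>V. min (rank_in V v) (corank_in V v))"
    show "\<forall>v\<in>V. mid_count V v = min (rank_in V v) (corank_in V v)"
      by (intro ballI sum_mono_inv[OF eq]) (use le assms in auto)
  qed simp
  finally show ?thesis
    unfolding balanced_def by (simp add: assms mid_count_eq_min_iff)
qed

lemma balanced_interval: "balanced (real ` {0..<n})"
  unfolding balanced_def
proof
  fix v assume "v \<in> real ` {0..<n}"
  then obtain j where j: "j < n" "v = real j"
    by auto
  have reflect: "2 * real j - real i \<in> real ` {0..<n}" if "i \<le> 2 * j" "2 * j - i < n" for i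
  proof (rule image_eqI)
    show "2 * real j - real i = real (2 * j - i)"
      using that(1) by (simp add: of_nat_diff)
  qed (use that(2) in simp)
  show "reflects_lower (real ` {0..<n}) v \<or> reflects_upper (real ` {0..<n}) v"
  proof (cases "2 * j < n")
    case True
    then have "reflects_lower (real ` {0..<n}) v"
      unfolding reflects_lower_def using j by (auto intro!: reflect)
    then show ?thesis ..
  next
    case False
    then have "reflects_upper (real ` {0..<n}) v"
      unfolding reflects_upper_def using j by (auto intro!: reflect)
    then show ?thesis ..
  qed
qed

theorem optimal_AP_3_iff_balanced:
  assumes "finite V"
  shows "optimal_AP 3 V \<longleftrightarrow> balanced V"
proof -
  let ?W = "real ` {0..<card V}"
  have W: "finite ?W" "card ?W = card V"
    by (auto simp: card_image)
  then have "count_AP 3 ?W = ap3_bound (card V)"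
    using count_AP_3_eq_ap3_bound_iff[OF W(1)] balanced_interval by simp
  then have "optimal_AP 3 V \<longleftrightarrow> count_AP 3 V = ap3_bound (card V)"
    unfolding optimal_AP_def using assms W count_AP_3_le_ap3_bound by (metis le_antisym)
  then show ?thesis
    using count_AP_3_eq_ap3_bound_iff[OF assms] by simp
qed

lemma balanced_affine_image:
  fixes a b :: real
  assumes "balanced V" "a \<noteq> 0"
  shows "balanced ((\<lambda>x. a * x + b) ` V)"
  unfolding balanced_def
proof
  let ?f = "\<lambda>x. a * x + b"
  fix y assume "y \<in> ?f ` V"
  then obtain v where v: "v \<in> V" and y: "y = ?f v"
    by auto
  have "inj ?f"
    using assms(2) by (auto intro: injI)
  moreover have "2 * ?f v - ?f u = ?f (2 * v - u)" for u
    by (simp add: algebra_simps)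
  ultimately have mem: "2 * ?f v - ?f u \<in> ?f ` V \<longleftrightarrow> 2 * v - u \<in> V" for u
    by (metis inj_image_mem_iff)
  have lower: "reflects_lower (?f ` V) y \<longleftrightarrow> (\<forall>u\<in>V. ?f u < ?f v \<longrightarrow> 2 * v - u \<in> V)"
    and upper: "reflects_upper (?f ` V) y \<longleftrightarrow> (\<forall>u\<in>V. ?f v < ?f u \<longrightarrow> 2 * v - u \<in> V)"
    unfolding reflects_lower_def reflects_upper_def y Ball_image_comp comp_def mem by (rule refl)+
  have "reflects_lower V v \<or> reflects_upper V v"
    using assms(1) v unfolding balanced_def by auto
  moreover have "a > 0 \<or> a < 0"
    using assms(2) by linarith
  ultimately show "reflects_lower (?f ` V) y \<or> reflects_upper (?f ` V) y"
    unfolding lower upper by (auto simp: reflects_lower_def reflects_upper_def mult_less_cancel_left)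
qed

lemma balanced_similarity_image_iff:
  assumes "similarity f"
  shows "balanced (f ` V) \<longleftrightarrow> balanced V"
proof -
  obtain a b where ab: "a \<noteq> 0" "f = (\<lambda>x. a * x + b)"
    using assms unfolding similarity_def by auto
  have "(\<lambda>x. (1 / a) * x + (- b / a)) ` f ` V = V"
    unfolding ab image_image using ab(1) by (simp add: field_simps)
  then show ?thesis
    using balanced_affine_image[of "f ` V" "1 / a" "- b / a"] balanced_affine_image[of V a b] ab
    by auto
qed

section \<open>Unions of an even and an odd progression\<close>

definition prog2 :: "int \<Rightarrow> nat \<Rightarrow> real set" where
  "prog2 c m = {real_of_int (c + 2 * int i) | i. i \<le> m}"

lemma consec_even_iff: "consec_even E \<longleftrightarrow> (\<exists>c m. even c \<and> E = prog2 c m)"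
  by (simp add: consec_even_def prog2_def)

lemma consec_odd_iff: "consec_odd D \<longleftrightarrow> (\<exists>c m. odd c \<and> D = prog2 c m)"
  by (simp add: consec_odd_def prog2_def)

lemma prog2_eq_image: "prog2 c m = (\<lambda>i. real_of_int (c + 2 * int i)) ` {..m}"
  unfolding prog2_def by auto

lemma prog2_nonempty: "prog2 c m \<noteq> {}"
  by (simp add: prog2_eq_image)

lemma prog2_Suc: "prog2 c (Suc m) = insert (of_int (c + 2 * int (Suc m))) (prog2 c m)"
  by (simp add: prog2_eq_image atMost_Suc)

lemma mem_prog2:
  "x \<in> prog2 c m \<longleftrightarrow> (\<exists>j. x = of_int j \<and> c \<le> j \<and> j \<le> c + 2 * int m \<and> even (j - c))"
proof
  assume "x \<in> prog2 c m"
  then obtain i where "i \<le> m" "x = of_int (c + 2 * int i)"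
    unfolding prog2_def by auto
  then show "\<exists>j. x = of_int j \<and> c \<le> j \<and> j \<le> c + 2 * int m \<and> even (j - c)"
    by (intro exI[of _ "c + 2 * int i"]) auto
next
  assume "\<exists>j. x = of_int j \<and> c \<le> j \<and> j \<le> c + 2 * int m \<and> even (j - c)"
  then obtain j where j: "x = of_int j" "c \<le> j" "j \<le> c + 2 * int m" "even (j - c)"
    by blast
  from j(4) obtain k where "j - c = 2 * k"
    by (rule evenE)
  with j have "j = c + 2 * int (nat k)" "nat k \<le> m"
    by auto
  then show "x \<in> prog2 c m"
    unfolding prog2_def using j(1) by blast
qed

lemma mem_prog2_centred:
  assumes "e \<ge> 0"
  shows "x \<in> prog2 (- e) (nat e) \<longleftrightarrow> (\<exists>j. x = of_int j \<and> \<bar>j\<bar> \<le> e \<and> even (j + e))"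
  using assms unfolding mem_prog2 by (auto simp: abs_le_iff)

lemma barycenter_prog2: "barycenter (prog2 c m) = of_int (c + int m)"
proof -
  let ?g = "\<lambda>i. real_of_int (c + 2 * int i)"
  have inj: "inj_on ?g {..m}"
    by (rule inj_onI) auto
  have "(\<Sum>i\<le>m. real i) = real m * (real m + 1) / 2"
    by (induction m) (auto simp: field_simps)
  moreover have "(\<Sum>i\<le>m. ?g i) = real (Suc m) * of_int c + 2 * (\<Sum>i\<le>m. real i)"
    by (simp add: sum.distrib sum_distrib_left)
  ultimately have "(\<Sum>i\<le>m. ?g i) = real (Suc m) * (of_int c + real m)"
    by (simp add: field_simps)
  moreover have "card (prog2 c m) = Suc m"
    unfolding prog2_eq_image using card_image[OF inj] by simp
  ultimately show ?thesis
    unfolding barycenter_def prog2_eq_image sum.reindex[OF inj] comp_def by simp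
qed

lemma prog2_reflect:
  fixes u :: real and t :: int
  assumes "u \<in> prog2 c m" "(u < of_int t \<and> t \<le> c + int m) \<or> (c + int m \<le> t \<and> of_int t < u)"
  shows "2 * of_int t - u \<in> prog2 c m"
proof -
  obtain i where i: "u = of_int i" "c \<le> i" "i \<le> c + 2 * int m" "even (i - c)"
    using assms(1) mem_prog2 by auto
  have "(i < t \<and> t \<le> c + int m) \<or> (c + int m \<le> t \<and> t < i)"
    using assms(2) unfolding i(1) by linarith
  then have "c \<le> 2 * t - i" "2 * t - i \<le> c + 2 * int m"
    using i by linarith+
  moreover have "even (2 * t - i - c)"
    using i(4) by presburger
  ultimately show ?thesis
    unfolding mem_prog2 using i(1) by (intro exI[of _ "2 * t - i"]) (auto simp: algebra_simps)
qed

lemma balanced_prog2_union: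
  assumes "\<bar>(c + int m) - (c' + int m')\<bar> \<le> 1"
  shows "balanced (prog2 c m \<union> prog2 c' m')"
  unfolding balanced_def
proof
  fix v assume "v \<in> prog2 c m \<union> prog2 c' m'"
  then obtain t where v: "v = of_int t"
    using mem_prog2 by auto
  have "(t \<le> c + int m \<and> t \<le> c' + int m') \<or> (c + int m \<le> t \<and> c' + int m' \<le> t)"
    using assms by linarith
  then show "reflects_lower (prog2 c m \<union> prog2 c' m') v \<or> reflects_upper (prog2 c m \<union> prog2 c' m') v"
  proof
    assume "t \<le> c + int m \<and> t \<le> c' + int m'"
    then have "reflects_lower (prog2 c m \<union> prog2 c' m') v"
      unfolding reflects_lower_def v using prog2_reflect by blast
    then show ?thesis ..
  next
    assume "c + int m \<le> t \<and> c' + int m' \<le> t"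
    then have "reflects_upper (prog2 c m \<union> prog2 c' m') v"
      unfolding reflects_upper_def v using prog2_reflect by blast
    then show ?thesis ..
  qed
qed

definition parity_split :: "int \<Rightarrow> real set \<Rightarrow> bool" where
  "parity_split \<delta> U \<longleftrightarrow> (\<exists>c m c' m'. even c \<and> odd c' \<and> U = prog2 c m \<union> prog2 c' m' \<and>
     \<bar>(c + int m) - (c' + int m')\<bar> = \<delta>)"

lemma parity_splitI:
  assumes "even c" "odd c'" "\<bar>(c + int m) - (c' + int m')\<bar> = \<delta>"
  shows "parity_split \<delta> (prog2 c m \<union> prog2 c' m')"
  unfolding parity_split_def using assms by blast

lemma parity_split_iff:
  "parity_split \<delta> U \<longleftrightarrow> (\<exists>E D. U = E \<union> D \<and> E \<noteq> {} \<and> D \<noteq> {} \<and> consec_even E \<and> consec_odd D \<and>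
     \<bar>barycenter E - barycenter D\<bar> = of_int \<delta>)"
proof
  assume "parity_split \<delta> U"
  then obtain c m c' m' where "even c" "odd c'" "U = prog2 c m \<union> prog2 c' m'"
    and "\<bar>(c + int m) - (c' + int m')\<bar> = \<delta>"
    unfolding parity_split_def by blast
  then show "\<exists>E D. U = E \<union> D \<and> E \<noteq> {} \<and> D \<noteq> {} \<and> consec_even E \<and> consec_odd D \<and>
     \<bar>barycenter E - barycenter D\<bar> = of_int \<delta>"
    unfolding consec_even_iff consec_odd_iff
    by (intro exI[of _ "prog2 c m"] exI[of _ "prog2 c' m'"])
      (auto simp: prog2_nonempty barycenter_prog2 simp flip: of_int_diff of_int_abs)
next
  assume "\<exists>E D. U = E \<union> D \<and> E \<noteq> {} \<and> D \<noteq> {} \<and> consec_even E \<and> consec_odd D \<and>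
     \<bar>barycenter E - barycenter D\<bar> = of_int \<delta>"
  then obtain c m c' m' where "even c" "odd c'" "U = prog2 c m \<union> prog2 c' m'"
    and "\<bar>barycenter (prog2 c m) - barycenter (prog2 c' m')\<bar> = of_int \<delta>"
    unfolding consec_even_iff consec_odd_iff by blast
  then show "parity_split \<delta> U"
    unfolding parity_split_def barycenter_prog2
    by (metis of_int_abs of_int_diff of_int_eq_iff)
qed

lemma balanced_if_parity_split:
  assumes "parity_split \<delta> U" "\<delta> \<le> 1"
  shows "balanced U"
  using assms balanced_prog2_union unfolding parity_split_def by auto

section \<open>The shape of balanced sets\<close>

lemma int_set_down_closed:
  fixes K :: "int set"
  assumes step: "\<And>j. j \<in> K \<Longrightarrow> 1 < j \<Longrightarrow> j - 2 \<in> K"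
    and "j \<in> K" "0 \<le> i" "i \<le> j" "even (j - i)"
  shows "i \<in> K"
proof -
  have down: "j - 2 * int k \<in> K" if "0 \<le> j - 2 * int k" for k
    using that
  proof (induction k)
    case 0
    then show ?case
      using \<open>j \<in> K\<close> by simp
  next
    case (Suc k)
    then have "j - 2 * int k - 2 \<in> K"
      using step by simp
    then show ?case
      by (simp add: algebra_simps)
  qed
  from assms(5) obtain r where "j - i = 2 * r"
    by (rule evenE)
  with assms(4) have "j - 2 * int (nat r) = i"
    by simp
  then show ?thesis
    using down[of "nat r"] assms(3) by simp
qed

lemma int_set_parity_shape:
  fixes K :: "int set"
  assumes "finite K" and sym: "\<And>j. j \<in> K \<Longrightarrow> - j \<in> K" and "0 \<in> K" "1 \<in> K"
    and step: "\<And>j. j \<in> K \<Longrightarrow> 1 < j \<Longrightarrow> j - 2 \<in> K"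
  obtains e d where "even e" "odd d" "0 \<le> e" "0 \<le> d"
    "K = {j. \<bar>j\<bar> \<le> e \<and> even j} \<union> {j. \<bar>j\<bar> \<le> d \<and> odd j}"
proof -
  define e where "e = Max {j \<in> K. even j}"
  define d where "d = Max {j \<in> K. odd j}"
  have fin: "finite {j \<in> K. even j}" "finite {j \<in> K. odd j}"
    using assms(1) by auto
  have nonempty: "{j \<in> K. even j} \<noteq> {}" "{j \<in> K. odd j} \<noteq> {}"
    using assms(3,4) by auto
  have e: "e \<in> K" "even e" "\<And>j. j \<in> K \<Longrightarrow> even j \<Longrightarrow> j \<le> e"
    using Max_in[OF fin(1) nonempty(1)] Max_ge[OF fin(1)] unfolding e_def by auto
  have d: "d \<in> K" "odd d" "\<And>j. j \<in> K \<Longrightarrow> odd j \<Longrightarrow> j \<le> d"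
    using Max_in[OF fin(2) nonempty(2)] Max_ge[OF fin(2)] unfolding d_def by auto
  have "0 \<le> e" "0 \<le> d"
    using e(3)[OF assms(3)] d(3)[OF assms(4)] by auto
  have abs_mem: "j \<in> K \<longleftrightarrow> \<bar>j\<bar> \<in> K" for j
    using sym by (cases "0 \<le> j") force+
  have "K = {j. \<bar>j\<bar> \<le> e \<and> even j} \<union> {j. \<bar>j\<bar> \<le> d \<and> odd j}"
  proof (intro equalityI subsetI)
    fix j assume "j \<in> K"
    then have "\<bar>j\<bar> \<in> K"
      using abs_mem by blast
    then show "j \<in> {j. \<bar>j\<bar> \<le> e \<and> even j} \<union> {j. \<bar>j\<bar> \<le> d \<and> odd j}"
      using e(3)[of "\<bar>j\<bar>"] d(3)[of "\<bar>j\<bar>"] by auto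
  next
    fix j assume "j \<in> {j. \<bar>j\<bar> \<le> e \<and> even j} \<union> {j. \<bar>j\<bar> \<le> d \<and> odd j}"
    then have "\<bar>j\<bar> \<in> K"
      using int_set_down_closed[OF step e(1)] int_set_down_closed[OF step d(1)] e(2) d(2)
      by auto
    then show "j \<in> K"
      using abs_mem by blast
  qed
  then show thesis
    using that e(2) d(2) \<open>0 \<le> e\<close> \<open>0 \<le> d\<close> by blast
qed

lemma subset_Ints_if_step_closed:
  fixes U :: "real set"
  assumes sym: "\<And>y. y \<in> U \<Longrightarrow> - y \<in> U"
    and gap: "\<And>y. y \<in> U \<Longrightarrow> \<not> (0 < y \<and> y < 1)"
    and step: "\<And>y. y \<in> U \<Longrightarrow> 1 < y \<Longrightarrow> y - 2 \<in> U"
  shows "U \<subseteq> \<int>"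
proof -
  have nonneg: "y \<in> \<int>" if "y \<in> U" "0 \<le> y" for y
    using that
  proof (induction "nat \<lfloor>y\<rfloor>" arbitrary: y rule: less_induct)
    case less
    show ?case
    proof (cases "1 < y")
      case True
      have "y - 2 \<in> U"
        using step less.prems(1) True by blast
      moreover have "0 \<le> y - 2"
        using gap[OF sym[OF \<open>y - 2 \<in> U\<close>]] True by linarith
      ultimately have "y - 2 \<in> \<int>"
        using less.hyps[of "y - 2"] by linarith
      then show ?thesis
        by (metis Ints_add Ints_numeral diff_add_cancel)
    next
      case False
      then have "y = 0 \<or> y = 1"
        using gap[OF less.prems(1)] less.prems(2) by linarith
      then show ?thesis
        by auto
    qed
  qed
  show ?thesis
  proof
    fix y assume "y \<in> U"
    then show "y \<in> \<int>"
      using nonneg[of y] nonneg[of "- y"] sym by (metis Ints_minus minus_minus linorder_le_cases neg_0_le_iff_le)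
  qed
qed

lemma normalized_shape:
  fixes U :: "real set"
  assumes "finite U" and sym: "\<And>y. y \<in> U \<Longrightarrow> - y \<in> U" and "0 \<in> U" "1 \<in> U"
    and gap: "\<And>y. y \<in> U \<Longrightarrow> \<not> (0 < y \<and> y < 1)"
    and reflect: "\<And>y. y \<in> U \<Longrightarrow> 1 < y \<Longrightarrow> 2 - y \<in> U"
  obtains e d where "even e" "odd d" "0 \<le> e" "0 \<le> d"
    "U = prog2 (- e) (nat e) \<union> prog2 (- d) (nat d)"
proof -
  have step: "y - 2 \<in> U" if "y \<in> U" "1 < y" for y
    using sym[OF reflect[OF that]] by simp
  define K where "K = {j. real_of_int j \<in> U}"
  have "U \<subseteq> \<int>"
    by (rule subset_Ints_if_step_closed[OF sym gap step])
  have U_eq: "U = real_of_int ` K"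
  proof (intro equalityI subsetI)
    fix y assume "y \<in> U"
    moreover have "y \<in> \<int>"
      using \<open>U \<subseteq> \<int>\<close> \<open>y \<in> U\<close> by blast
    then obtain j where "y = of_int j"
      by (rule Ints_cases)
    ultimately show "y \<in> real_of_int ` K"
      unfolding K_def by blast
  qed (auto simp: K_def)
  obtain e d where ed: "even e" "odd d" "0 \<le> e" "0 \<le> d"
    and K: "K = {j. \<bar>j\<bar> \<le> e \<and> even j} \<union> {j. \<bar>j\<bar> \<le> d \<and> odd j}"
  proof (rule int_set_parity_shape)
    show "finite K"
      using \<open>finite U\<close> unfolding U_eq by (simp add: finite_image_iff inj_on_def)
    show "- j \<in> K" if "j \<in> K" for j
      using sym that unfolding K_def by force
    show "0 \<in> K" "1 \<in> K"
      using assms(3,4) unfolding K_def by auto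
    show "j - 2 \<in> K" if "j \<in> K" "1 < j" for j
      using step that unfolding K_def by force
  qed
  have parity: "even (j + e) \<longleftrightarrow> even j" "even (j + d) \<longleftrightarrow> odd j" for j
    using ed(1,2) by auto
  have "U = prog2 (- e) (nat e) \<union> prog2 (- d) (nat d)"
    unfolding U_eq K set_eq_iff Un_iff mem_prog2_centred[OF ed(3)] mem_prog2_centred[OF ed(4)] parity
    by blast
  then show thesis
    using that ed by blast
qed

lemma similarity_normalize:
  assumes "c < d"
  shows "similarity (\<lambda>x. (x - c) / (d - c))"
  unfolding similarity_def using assms
  by (intro exI[of _ "1 / (d - c)"] exI[of _ "- c / (d - c)"]) (auto simp: diff_divide_distrib)

lemma similarity_comp_uminus:
  assumes "similarity f"
  shows "similarity (\<lambda>x. f (- x))"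
  using assms unfolding similarity_def by (metis minus_mult_commute mult_minus_left neg_equal_0_iff_equal)

lemma balanced_reflects_lower:
  assumes "finite V" "balanced V" "v \<in> V" "rank_in V v \<le> corank_in V v"
  shows "reflects_lower V v"
  using assms mid_count_le_rank_in[of V v] mid_count_eq_rank_in_iff[of V v] mid_count_eq_corank_in_iff[of V v]
  unfolding balanced_def by force

lemma balanced_reflects_upper:
  assumes "finite V" "balanced V" "v \<in> V" "corank_in V v \<le> rank_in V v"
  shows "reflects_upper V v"
  using assms mid_count_le_corank_in[of V v] mid_count_eq_rank_in_iff[of V v] mid_count_eq_corank_in_iff[of V v]
  unfolding balanced_def by force

lemma rank_in_Suc_gap:
  assumes "finite V" "u \<in> V" "x \<in> V" "rank_in V v = Suc (rank_in V u)"
  shows "\<not> (u < x \<and> x < v)"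
  using rank_in_less_rank_in[OF assms(1,2), of x] rank_in_less_rank_in[OF assms(1,3), of v] assms(4)
  by auto

lemma shape_around_centre:
  fixes V :: "real set"
  assumes "finite V" "c \<in> V" "d \<in> V" "c < d"
    and sym: "\<And>x. x \<in> V \<Longrightarrow> 2 * c - x \<in> V"
    and gap: "\<And>x. x \<in> V \<Longrightarrow> \<not> (c < x \<and> x < d)"
    and upper: "reflects_upper V d"
  obtains e e' where "even e" "odd e'" "0 \<le> e" "0 \<le> e'"
    "(\<lambda>x. (x - c) / (d - c)) ` V = prog2 (- e) (nat e) \<union> prog2 (- e') (nat e')"
proof -
  define g where "g x = (x - c) / (d - c)" for x
  have g_less: "g x < g y \<longleftrightarrow> x < y" for x y
    using assms(4) by (simp add: g_def divide_less_cancel)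
  have g_ends: "g c = 0" "g d = 1"
    using assms(4) by (simp_all add: g_def)
  have g_reflect: "g (2 * c - x) = - g x" "g (2 * d - x) = 2 - g x" for x
    using assms(4) by (simp_all add: g_def field_simps)
  obtain e e' where "even e" "odd e'" "0 \<le> e" "0 \<le> e'"
    "g ` V = prog2 (- e) (nat e) \<union> prog2 (- e') (nat e')"
  proof (rule normalized_shape)
    show "finite (g ` V)"
      using assms(1) by simp
    show "- y \<in> g ` V" if "y \<in> g ` V" for y
      using that sym by (metis g_reflect(1) image_iff)
    show "0 \<in> g ` V" "1 \<in> g ` V"
      using assms(2,3) g_ends by (metis image_eqI)+
    show "\<not> (0 < y \<and> y < 1)" if "y \<in> g ` V" for y
      using that gap g_less g_ends by (metis imageE)
    show "2 - y \<in> g ` V" if y: "y \<in> g ` V" "1 < y" for y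
    proof -
      obtain x where x: "x \<in> V" "y = g x"
        using y(1) by auto
      then have "d < x"
        using y(2) g_less[of d x] g_ends by simp
      then have "2 * d - x \<in> V"
        using upper x(1) unfolding reflects_upper_def by blast
      then show ?thesis
        using x(2) by (metis g_reflect(2) image_eqI)
    qed
  qed
  then show thesis
    using that unfolding g_def by blast
qed

lemma balanced_odd_parity_split:
  assumes "finite V" "balanced V" "card V = 2 * k + 1" "1 \<le> k"
  shows "\<exists>f. similarity f \<and> parity_split 0 (f ` V)"
proof -
  obtain c where c: "c \<in> V" "rank_in V c = k"
    using obtain_rank_in[OF assms(1), of k] assms(3) by auto
  obtain d where d: "d \<in> V" "rank_in V d = Suc k"
    using obtain_rank_in[OF assms(1), of "Suc k"] assms(3,4) by auto
  have "corank_in V c = k" "corank_in V d = k - 1"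
    using corank_in_eq[OF assms(1)] c d assms(3) by auto
  then have "reflects_lower V c" "reflects_upper V c" "reflects_upper V d"
    using balanced_reflects_lower[OF assms(1,2)] balanced_reflects_upper[OF assms(1,2)] c d by auto
  then have sym: "2 * c - x \<in> V" if "x \<in> V" for x
    using that unfolding reflects_lower_def reflects_upper_def by (cases x c rule: linorder_cases) auto
  have "c < d"
    using rank_in_less_iff[OF assms(1) c(1) d(1)] c d by simp
  then obtain e e' where "even e" "odd e'" "0 \<le> e" "0 \<le> e'"
    "(\<lambda>x. (x - c) / (d - c)) ` V = prog2 (- e) (nat e) \<union> prog2 (- e') (nat e')"
    using shape_around_centre[OF assms(1) c(1) d(1) _ sym] rank_in_Suc_gap[OF assms(1) c(1)] c d
      \<open>reflects_upper V d\<close> by metis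
  moreover have "parity_split 0 (prog2 (- e) (nat e) \<union> prog2 (- e') (nat e'))"
    by (rule parity_splitI) (use \<open>even e\<close> \<open>odd e'\<close> \<open>0 \<le> e\<close> \<open>0 \<le> e'\<close> in auto)
  ultimately show ?thesis
    using similarity_normalize[OF \<open>c < d\<close>] by metis
qed

lemma parity_split_insert_above:
  assumes "even e" "odd e'" "0 \<le> e" "0 \<le> e'"
    and U: "U = prog2 (- e) (nat e) \<union> prog2 (- e') (nat e')"
    and "2 - y \<in> U" and above: "\<And>z. z \<in> U \<Longrightarrow> z < y"
  shows "parity_split 1 (insert y U)"
proof -
  have "of_int e \<in> prog2 (- e) (nat e)" "of_int e' \<in> prog2 (- e') (nat e')"
    using assms(3,4) by (auto simp: mem_prog2_centred)
  then have "of_int e \<in> U" "of_int e' \<in> U"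
    unfolding U by auto
  then have "of_int e < y" "of_int e' < y"
    using above by auto
  moreover obtain j where j: "2 - y = of_int j" "\<bar>j\<bar> \<le> e \<and> even (j + e) \<or> \<bar>j\<bar> \<le> e' \<and> even (j + e')"
    using \<open>2 - y \<in> U\<close> unfolding U Un_iff mem_prog2_centred[OF assms(3)] mem_prog2_centred[OF assms(4)]
    by blast
  ultimately have "j < 2 - e" "j < 2 - e'"
    by linarith+
  then have "j = - e \<or> j = - e'"
    using j(2) assms(1,2) by presburger
  then have "2 - y = of_int (- e) \<or> 2 - y = of_int (- e')"
    using j(1) by auto
  then show ?thesis
  proof
    assume "2 - y = of_int (- e)"
    then have "y = of_int e + 2"
      by simp
    then have "insert y U = prog2 (- e) (Suc (nat e)) \<union> prog2 (- e') (nat e')"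
      unfolding U prog2_Suc using assms(3) by simp
    then show ?thesis
      using parity_splitI[of "- e" "- e'" "Suc (nat e)" "nat e'" 1] assms(1-4) by simp
  next
    assume "2 - y = of_int (- e')"
    then have "y = of_int e' + 2"
      by simp
    then have "insert y U = prog2 (- e) (nat e) \<union> prog2 (- e') (Suc (nat e'))"
      unfolding U prog2_Suc using assms(4) by simp
    then show ?thesis
      using parity_splitI[of "- e" "- e'" "nat e" "Suc (nat e')" 1] assms(1-4) by simp
  qed
qed

lemma reflect_lower_onto_upper_minus_max:
  assumes "finite V" "reflects_lower V v" "corank_in V v = Suc (rank_in V v)"
    and "mn \<in> V" "mx \<in> V" and bounds: "\<And>x. x \<in> V \<Longrightarrow> mn \<le> x \<and> x \<le> mx"
    and "2 * v - mn \<noteq> mx"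
  shows "(\<lambda>u. 2 * v - u) ` {u \<in> V. u < v} = {w \<in> V. v < w} - {mx}"
proof (rule card_subset_eq)
  show "finite ({w \<in> V. v < w} - {mx})"
    using assms(1) by simp
  show "(\<lambda>u. 2 * v - u) ` {u \<in> V. u < v} \<subseteq> {w \<in> V. v < w} - {mx}"
  proof
    fix w assume "w \<in> (\<lambda>u. 2 * v - u) ` {u \<in> V. u < v}"
    then obtain u where u: "u \<in> V" "u < v" "w = 2 * v - u"
      by blast
    then have "w \<in> V" "v < w" "mn \<le> u" "2 * v - mn \<in> V"
      using assms(2,4) bounds[of u] unfolding reflects_lower_def by auto
    moreover have "2 * v - mn \<le> mx"
      using bounds calculation(4) by blast
    ultimately show "w \<in> {w \<in> V. v < w} - {mx}"
      using u(3) assms(7) by auto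
  qed
  have "{w \<in> V. v < w} \<noteq> {}"
    using assms(3) unfolding corank_in_def by (metis card.empty nat.distinct(1))
  then have "mx \<in> {w \<in> V. v < w}"
    using assms(5) bounds by fastforce
  then have "card ({w \<in> V. v < w} - {mx}) = rank_in V v"
    using assms(1,3) by (simp add: corank_in_def)
  also have "\<dots> = card ((\<lambda>u. 2 * v - u) ` {u \<in> V. u < v})"
    by (simp add: rank_in_def card_image inj_on_def)
  finally show "card ((\<lambda>u. 2 * v - u) ` {u \<in> V. u < v}) = card ({w \<in> V. v < w} - {mx})"
    by simp
qed

lemma symmetric_without_max:
  assumes "finite V" "reflects_lower V v" "corank_in V v = Suc (rank_in V v)"
    and "mn \<in> V" "mx \<in> V" "\<And>x. x \<in> V \<Longrightarrow> mn \<le> x \<and> x \<le> mx"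
    and "2 * v - mn \<noteq> mx" and x: "x \<in> V - {mx}"
  shows "2 * v - x \<in> V - {mx}"
proof -
  note onto = reflect_lower_onto_upper_minus_max[OF assms(1-7)]
  consider "x < v" | "x = v" | "v < x"
    by linarith
  then show ?thesis
  proof cases
    case 1
    then have "2 * v - x \<in> (\<lambda>u. 2 * v - u) ` {u \<in> V. u < v}"
      using x by blast
    with onto show ?thesis
      by simp
  next
    case 2
    then show ?thesis
      using x by simp
  next
    case 3
    then have "x \<in> (\<lambda>u. 2 * v - u) ` {u \<in> V. u < v}"
      using x by (simp add: onto)
    then obtain u where "u \<in> V" "u < v" "x = 2 * v - u"
      by blast
    moreover have "u \<noteq> mx"
      using \<open>u < v\<close> 3 x assms(6) by fastforce
    ultimately show ?thesis
      by simp
  qed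
qed

lemma rank_in_extremes:
  assumes "finite V" "mn \<in> V" "rank_in V mn = 0" "mx \<in> V" "rank_in V mx = card V - 1" "x \<in> V"
  shows "mn \<le> x \<and> x \<le> mx"
  using rank_in_less_iff[OF assms(1) assms(6) assms(2)] rank_in_less_iff[OF assms(1) assms(4) assms(6)]
    rank_in_less_card[OF assms(1,6)] assms(3,5) by linarith

lemma balanced_even_parity_split_max_unreflected:
  assumes "finite V" "balanced V" "card V = 2 * k" "2 \<le> k"
    and v1: "v1 \<in> V" "rank_in V v1 = k - 1"
    and mn: "mn \<in> V" "rank_in V mn = 0"
    and mx: "mx \<in> V" "rank_in V mx = 2 * k - 1"
    and "2 * v1 - mn \<noteq> mx"
  shows "\<exists>f. similarity f \<and> parity_split 1 (f ` V)"
proof -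
  obtain v2 where v2: "v2 \<in> V" "rank_in V v2 = k"
    using obtain_rank_in[OF assms(1), of k] assms(3,4) by auto
  have bounds: "mn \<le> x \<and> x \<le> mx" if "x \<in> V" for x
    using rank_in_extremes[OF assms(1) mn mx(1)] mx(2) assms(3) that by simp
  have "corank_in V v1 = Suc (rank_in V v1)" "corank_in V v2 = k - 1"
    using corank_in_eq[OF assms(1)] v1 v2 assms(3,4) by auto
  then have lower: "reflects_lower V v1" and upper: "reflects_upper V v2"
    using balanced_reflects_lower[OF assms(1,2) v1(1)] balanced_reflects_upper[OF assms(1,2) v2(1)]
      v1(2) v2(2) by auto
  have "v1 < v2" "v2 < mx"
    using rank_in_less_iff[OF assms(1) v1(1) v2(1)] rank_in_less_iff[OF assms(1) v2(1) mx(1)]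
      v1 v2 mx assms(4) by auto
  let ?W = "V - {mx}"
  have sym: "2 * v1 - x \<in> ?W" if "x \<in> ?W" for x
    using symmetric_without_max[OF assms(1) lower \<open>corank_in V v1 = _\<close> mn(1) mx(1) bounds] assms(11) that
    by blast
  have gap: "\<not> (v1 < x \<and> x < v2)" if "x \<in> ?W" for x
    using rank_in_Suc_gap[OF assms(1) v1(1)] that v1(2) v2(2) assms(4) by (simp add: Suc_diff_1)
  have upper_W: "reflects_upper ?W v2"
    using upper \<open>v2 < mx\<close> unfolding reflects_upper_def by auto
  obtain e e' where ee': "even e" "odd e'" "0 \<le> e" "0 \<le> e'"
    and shape: "(\<lambda>x. (x - v1) / (v2 - v1)) ` ?W = prog2 (- e) (nat e) \<union> prog2 (- e') (nat e')"
    using shape_around_centre[of ?W v1 v2] assms(1) v1(1) v2(1) \<open>v1 < v2\<close> \<open>v2 < mx\<close> sym gap upper_W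
    by auto
  define g where "g x = (x - v1) / (v2 - v1)" for x
  have g_less: "g x < g y \<longleftrightarrow> x < y" for x y
    using \<open>v1 < v2\<close> by (simp add: g_def divide_less_cancel)
  have "2 * v2 - mx \<in> ?W"
    using upper mx(1) \<open>v2 < mx\<close> unfolding reflects_upper_def by auto
  moreover have "g (2 * v2 - mx) = 2 - g mx"
    using \<open>v1 < v2\<close> by (simp add: g_def field_simps)
  ultimately have "2 - g mx \<in> g ` ?W"
    by (metis image_eqI)
  moreover have "z < g mx" if "z \<in> g ` ?W" for z
    using that bounds g_less by force
  ultimately have "parity_split 1 (insert (g mx) (g ` ?W))"
    using parity_split_insert_above[OF ee'] shape unfolding g_def by blast
  moreover have "insert (g mx) (g ` ?W) = g ` V"
    using mx(1) by blast
  ultimately show ?thesis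
    using similarity_normalize[OF \<open>v1 < v2\<close>] unfolding g_def by metis
qed

lemma balanced_even_parity_split:
  assumes "finite V" "balanced V" "card V = 2 * k" "2 \<le> k"
  shows "\<exists>f. similarity f \<and> parity_split 1 (f ` V)"
proof -
  have "k - 1 < card V" "k < card V" "0 < card V" "2 * k - 1 < card V"
    using assms(3,4) by simp_all
  then obtain v1 v2 mn mx where v1: "v1 \<in> V" "rank_in V v1 = k - 1" and v2: "v2 \<in> V" "rank_in V v2 = k"
    and mn: "mn \<in> V" "rank_in V mn = 0" and mx: "mx \<in> V" "rank_in V mx = 2 * k - 1"
    by (metis obtain_rank_in assms(1))
  show ?thesis
  proof (cases "2 * v1 - mn = mx")
    case False
    then show ?thesis
      using balanced_even_parity_split_max_unreflected[OF assms v1 mn mx] by blast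
  next
    case True
    \<comment> \<open>Reflecting V turns the upper median into the lower one and exchanges minimum and maximum.\<close>
    have "v1 < v2"
      using rank_in_less_iff[OF assms(1) v1(1) v2(1)] v1(2) v2(2) assms(4) by simp
    have "inj_on uminus V"
      by simp
    then have "card (uminus ` V) = 2 * k"
      using assms(3) by (simp add: card_image)
    moreover have "balanced (uminus ` V)"
      using balanced_affine_image[OF assms(2), of "- 1" 0] by simp
    moreover have "rank_in (uminus ` V) (- v) = 2 * k - 1 - rank_in V v" if "v \<in> V" for v
      using rank_in_uminus_image corank_in_eq[OF assms(1) that] assms(3) by simp
    moreover have "2 * (- v2) - (- mx) \<noteq> - mn"
      using True \<open>v1 < v2\<close> by linarith
    ultimately obtain f where "similarity f" "parity_split 1 (f ` uminus ` V)"
      using balanced_even_parity_split_max_unreflected[of "uminus ` V" k "- v2" "- mx" "- mn"] assms v2 mn mx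
      by auto
    then show ?thesis
      using similarity_comp_uminus by (metis image_image)
  qed
qed

lemma balanced_iff_similar_parity_split:
  assumes "finite V" "3 \<le> card V"
  shows "balanced V \<longleftrightarrow> (\<exists>f. similarity f \<and> parity_split (if odd (card V) then 0 else 1) (f ` V))"
proof
  assume "balanced V"
  show "\<exists>f. similarity f \<and> parity_split (if odd (card V) then 0 else 1) (f ` V)"
  proof (cases "odd (card V)")
    case True
    then have "card V = 2 * (card V div 2) + 1" "1 \<le> card V div 2"
      using assms(2) by (simp_all add: odd_two_times_div_two_succ)
    then show ?thesis
      using balanced_odd_parity_split[OF assms(1) \<open>balanced V\<close>] True by presburger
  next
    case False
    then have "card V = 2 * (card V div 2)" "2 \<le> card V div 2"
      using assms(2) by presburger+
    then show ?thesis
      using balanced_even_parity_split[OF assms(1) \<open>balanced V\<close>] False by presburger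
  qed
next
  assume "\<exists>f. similarity f \<and> parity_split (if odd (card V) then 0 else 1) (f ` V)"
  then obtain f where "similarity f" "balanced (f ` V)"
    using balanced_if_parity_split by (metis order.refl zero_le_one)
  then show "balanced V"
    using balanced_similarity_image_iff by blast
qed

theorem mainTheorem7:
  fixes V :: "real set" and n :: nat
  assumes "n \<ge> 3" and "finite V" and "card V = n"
  shows "optimal_AP 3 V \<longleftrightarrow>
    (\<exists>f E D. similarity f \<and> f ` V = E \<union> D \<and> E \<noteq> {} \<and> D \<noteq> {} \<and>
       consec_even E \<and> consec_odd D \<and>
       (if odd n then barycenter E = barycenter D
        else \<bar>barycenter E - barycenter D\<bar> = 1))"
proof -
  define \<delta> :: int where "\<delta> = (if odd n then 0 else 1)"
  have "(if odd n then barycenter E = barycenter D else \<bar>barycenter E - barycenter D\<bar> = 1) \<longleftrightarrow>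
        \<bar>barycenter E - barycenter D\<bar> = of_int \<delta>" for E D
    by (simp add: \<delta>_def)
  then have "(\<exists>f E D. similarity f \<and> f ` V = E \<union> D \<and> E \<noteq> {} \<and> D \<noteq> {} \<and>
       consec_even E \<and> consec_odd D \<and>
       (if odd n then barycenter E = barycenter D else \<bar>barycenter E - barycenter D\<bar> = 1)) \<longleftrightarrow>
     (\<exists>f. similarity f \<and> parity_split \<delta> (f ` V))"
    unfolding parity_split_iff by presburger
  moreover have "optimal_AP 3 V \<longleftrightarrow> (\<exists>f. similarity f \<and> parity_split \<delta> (f ` V))"
    using optimal_AP_3_iff_balanced[OF assms(2)] balanced_iff_similar_parity_split[OF assms(2)] assms(1,3)
    unfolding \<delta>_def by simp
  ultimately show ?thesis
    by simp
qed

end
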